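(* For any $a,b,c,d\in\mathbb R$, $$3\max(a,b,c,d)+\max(a,d)+\max(b,d)+\max(c,d)\le2\max(a,b,d)+2\max(a,c,d)+2\max(b,c,d).$$ *)

theory Defs
  imports Complex_Main
begin

end

theory Submission
  imports Defs
begin

text \<open>With \<open>x = max a d\<close>, \<open>y = max b d\<close>, \<open>z = max c d\<close> every maximum in the inequality
  is a maximum of some of \<open>x, y, z\<close>, so it becomes a symmetric inequality in three variables;
  for \<open>x \<le> y \<le> z\<close> that inequality reads \<open>x + y + 4z \<le> 2y + 4z\<close>.\<close>

lemma three_max_plus_sum_le_two_sum_max_pairs:
  fixes x y z :: "'a :: linordered_idom"
  shows "3 * max (max x y) z + x + y + z \<le> 2 * max x y + 2 * max x z + 2 * max y z"
  by (simp add: max_def)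

lemma max_max_distrib_right:
  fixes a b d :: "'a :: linorder"
  shows "max (max a b) d = max (max a d) (max b d)"
  by (metis max.assoc max.commute max.left_idem)

theorem lemma11:
  fixes a b c d :: real
  shows "3 * max (max a b) (max c d) + max a d + max b d + max c d
         \<le> 2 * max (max a b) d + 2 * max (max a c) d + 2 * max (max b c) d"
proof -
  have "max (max a b) (max c d) = max (max (max a d) (max b d)) (max c d)"
    by (simp add: max_max_distrib_right [symmetric] max.assoc)
  then show ?thesis
    using three_max_plus_sum_le_two_sum_max_pairs [of "max a d" "max b d" "max c d"]
    by (simp only: max_max_distrib_right [of a b d] max_max_distrib_right [of a c d]
        max_max_distrib_right [of b c d])
qed

end
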